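(* Let $\mathcal{A}$ be an Abelian category. Let $L\xrightarrow{\ell_2}M\xleftarrow{r_2}R$ be a cospan with pullback $L\times_MR$ and projections $\ell_1\colon L\times_MR\to L$, $r_1\colon L\times_MR\to R$, and let $f\colon Z\to L\times_MR$ be any morphism. Let $\ell_2^*\colon\operatorname{coker}(\ell_1f)\to\operatorname{coker}(\ell_2\ell_1f)$ and $r_2^*\colon\operatorname{coker}(r_1f)\to\operatorname{coker}(\ell_2\ell_1f)=\operatorname{coker}(r_2r_1f)$ be the induced maps on cokernels. Then the canonical morphism \[u\colon\operatorname{coker}f\to\operatorname{coker}(\ell_1f)\times_{\operatorname{coker}(\ell_2\ell_1f)}\operatorname{coker}(r_1f),\] induced by the maps $\operatorname{coker}f\to\operatorname{coker}(\ell_1f)$ and $\operatorname{coker}f\to\operatorname{coker}(r_1f)$ (induced by $\ell_1$ and $r_1$), is an epimorphism. *)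

theory Defs
  imports Main
begin

text \<open>A (preadditive) category given explicitly: objects, arrows, domain, codomain,
composition (Comp g f = g after f), identities, addition of parallel arrows and
zero arrows Zer x y : x \<rightarrow> y.\<close>

record ('o, 'a) acat =
  Ob   :: "'o set"
  Ar   :: "'a set"
  Dom  :: "'a \<Rightarrow> 'o"
  Cod  :: "'a \<Rightarrow> 'o"
  Comp :: "'a \<Rightarrow> 'a \<Rightarrow> 'a"
  Idt  :: "'o \<Rightarrow> 'a"
  Add  :: "'a \<Rightarrow> 'a \<Rightarrow> 'a"
  Zer  :: "'o \<Rightarrow> 'o \<Rightarrow> 'a"

definition Hom :: "('o, 'a) acat \<Rightarrow> 'o \<Rightarrow> 'o \<Rightarrow> 'a set" where
  "Hom C x y = {f \<in> Ar C. Dom C f = x \<and> Cod C f = y}"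

definition category :: "('o, 'a) acat \<Rightarrow> bool" where
  "category C \<longleftrightarrow>
     (\<forall>f \<in> Ar C. Dom C f \<in> Ob C \<and> Cod C f \<in> Ob C) \<and>
     (\<forall>x \<in> Ob C. Idt C x \<in> Hom C x x) \<and>
     (\<forall>f \<in> Ar C. Comp C f (Idt C (Dom C f)) = f \<and> Comp C (Idt C (Cod C f)) f = f) \<and>
     (\<forall>f \<in> Ar C. \<forall>g \<in> Ar C. Cod C f = Dom C g \<longrightarrow> Comp C g f \<in> Hom C (Dom C f) (Cod C g)) \<and>
     (\<forall>f \<in> Ar C. \<forall>g \<in> Ar C. \<forall>h \<in> Ar C. Cod C f = Dom C g \<longrightarrow> Cod C g = Dom C h \<longrightarrow>
        Comp C h (Comp C g f) = Comp C (Comp C h g) f)"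

definition preadditive :: "('o, 'a) acat \<Rightarrow> bool" where
  "preadditive C \<longleftrightarrow> category C \<and>
     (\<forall>x \<in> Ob C. \<forall>y \<in> Ob C.
        Zer C x y \<in> Hom C x y \<and>
        (\<forall>f \<in> Hom C x y. \<forall>g \<in> Hom C x y. Add C f g \<in> Hom C x y) \<and>
        (\<forall>f \<in> Hom C x y. \<forall>g \<in> Hom C x y. \<forall>h \<in> Hom C x y.
            Add C (Add C f g) h = Add C f (Add C g h)) \<and>
        (\<forall>f \<in> Hom C x y. \<forall>g \<in> Hom C x y. Add C f g = Add C g f) \<and>
        (\<forall>f \<in> Hom C x y. Add C f (Zer C x y) = f) \<and>
        (\<forall>f \<in> Hom C x y. \<exists>g \<in> Hom C x y. Add C f g = Zer C x y)) \<and>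
     (\<forall>x \<in> Ob C. \<forall>y \<in> Ob C. \<forall>z \<in> Ob C.
        (\<forall>f \<in> Hom C x y. \<forall>g \<in> Hom C x y. \<forall>h \<in> Hom C y z.
            Comp C h (Add C f g) = Add C (Comp C h f) (Comp C h g)) \<and>
        (\<forall>f \<in> Hom C x y. \<forall>g \<in> Hom C y z. \<forall>h \<in> Hom C y z.
            Comp C (Add C g h) f = Add C (Comp C g f) (Comp C h f)))"

definition is_zero_object :: "('o, 'a) acat \<Rightarrow> 'o \<Rightarrow> bool" where
  "is_zero_object C z \<longleftrightarrow> z \<in> Ob C \<and>
     (\<forall>x \<in> Ob C. (\<exists>!f. f \<in> Hom C z x) \<and> (\<exists>!f. f \<in> Hom C x z))"

definition is_product :: "('o, 'a) acat \<Rightarrow> 'o \<Rightarrow> 'o \<Rightarrow> 'a \<Rightarrow> 'a \<Rightarrow> bool" where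
  "is_product C x y p q \<longleftrightarrow> p \<in> Ar C \<and> q \<in> Ar C \<and> Dom C p = Dom C q \<and>
     Cod C p = x \<and> Cod C q = y \<and>
     (\<forall>a \<in> Ar C. \<forall>b \<in> Ar C. Dom C a = Dom C b \<longrightarrow> Cod C a = x \<longrightarrow> Cod C b = y \<longrightarrow>
        (\<exists>!h. h \<in> Hom C (Dom C a) (Dom C p) \<and> Comp C p h = a \<and> Comp C q h = b))"

definition additive :: "('o, 'a) acat \<Rightarrow> bool" where
  "additive C \<longleftrightarrow> preadditive C \<and> (\<exists>z. is_zero_object C z) \<and>
     (\<forall>x \<in> Ob C. \<forall>y \<in> Ob C. \<exists>p q. is_product C x y p q)"

definition is_kernel :: "('o, 'a) acat \<Rightarrow> 'a \<Rightarrow> 'a \<Rightarrow> bool" where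
  "is_kernel C f k \<longleftrightarrow> f \<in> Ar C \<and> k \<in> Ar C \<and> Cod C k = Dom C f \<and>
     Comp C f k = Zer C (Dom C k) (Cod C f) \<and>
     (\<forall>g \<in> Ar C. Cod C g = Dom C f \<longrightarrow> Comp C f g = Zer C (Dom C g) (Cod C f) \<longrightarrow>
        (\<exists>!h. h \<in> Hom C (Dom C g) (Dom C k) \<and> Comp C k h = g))"

definition is_cokernel :: "('o, 'a) acat \<Rightarrow> 'a \<Rightarrow> 'a \<Rightarrow> bool" where
  "is_cokernel C f c \<longleftrightarrow> f \<in> Ar C \<and> c \<in> Ar C \<and> Dom C c = Cod C f \<and>
     Comp C c f = Zer C (Dom C f) (Cod C c) \<and>
     (\<forall>g \<in> Ar C. Dom C g = Cod C f \<longrightarrow> Comp C g f = Zer C (Dom C f) (Cod C g) \<longrightarrow>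
        (\<exists>!h. h \<in> Hom C (Cod C c) (Cod C g) \<and> Comp C h c = g))"

definition is_mono :: "('o, 'a) acat \<Rightarrow> 'a \<Rightarrow> bool" where
  "is_mono C m \<longleftrightarrow> m \<in> Ar C \<and>
     (\<forall>g \<in> Ar C. \<forall>h \<in> Ar C. Dom C g = Dom C h \<longrightarrow> Cod C g = Dom C m \<longrightarrow> Cod C h = Dom C m \<longrightarrow>
        Comp C m g = Comp C m h \<longrightarrow> g = h)"

definition is_epi :: "('o, 'a) acat \<Rightarrow> 'a \<Rightarrow> bool" where
  "is_epi C e \<longleftrightarrow> e \<in> Ar C \<and>
     (\<forall>g \<in> Ar C. \<forall>h \<in> Ar C. Cod C g = Cod C h \<longrightarrow> Dom C g = Cod C e \<longrightarrow> Dom C h = Cod C e \<longrightarrow>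
        Comp C g e = Comp C h e \<longrightarrow> g = h)"

definition abelian :: "('o, 'a) acat \<Rightarrow> bool" where
  "abelian C \<longleftrightarrow> additive C \<and>
     (\<forall>f \<in> Ar C. \<exists>k. is_kernel C f k) \<and>
     (\<forall>f \<in> Ar C. \<exists>c. is_cokernel C f c) \<and>
     (\<forall>m. is_mono C m \<longrightarrow> (\<exists>f. is_kernel C f m)) \<and>
     (\<forall>e. is_epi C e \<longrightarrow> (\<exists>f. is_cokernel C f e))"

definition is_pullback :: "('o, 'a) acat \<Rightarrow> 'a \<Rightarrow> 'a \<Rightarrow> 'a \<Rightarrow> 'a \<Rightarrow> bool" where
  "is_pullback C l2 r2 l1 r1 \<longleftrightarrow>
     l2 \<in> Ar C \<and> r2 \<in> Ar C \<and> l1 \<in> Ar C \<and> r1 \<in> Ar C \<and>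
     Cod C l2 = Cod C r2 \<and> Dom C l1 = Dom C r1 \<and>
     Cod C l1 = Dom C l2 \<and> Cod C r1 = Dom C r2 \<and>
     Comp C l2 l1 = Comp C r2 r1 \<and>
     (\<forall>a \<in> Ar C. \<forall>b \<in> Ar C. Dom C a = Dom C b \<longrightarrow> Cod C a = Dom C l2 \<longrightarrow> Cod C b = Dom C r2 \<longrightarrow>
        Comp C l2 a = Comp C r2 b \<longrightarrow>
        (\<exists>!h. h \<in> Hom C (Dom C a) (Dom C l1) \<and> Comp C l1 h = a \<and> Comp C r1 h = b))"

end

theory Submission
  imports Defs
begin

text \<open>
  Element chase with pseudo-elements, where a pseudo-element of an object \<open>X\<close> is an arrow
  \<open>W \<rightarrow> X\<close> and we may always pass to an epimorphic cover \<open>W' \<rightarrow> W\<close> (epis are stable under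
  pullback in an Abelian category). A pseudo-element of
  \<open>P = coker(\<ell>\<^sub>1f) \<times>\<^bsub>coker(\<ell>\<^sub>2\<ell>\<^sub>1f)\<^esub> coker(r\<^sub>1f)\<close> lifts to a pair \<open>(a, b)\<close>
  in \<open>L\<close> and \<open>R\<close> whose images in \<open>coker(\<ell>\<^sub>2\<ell>\<^sub>1f)\<close> agree. Then \<open>\<ell>\<^sub>2a - r\<^sub>2b\<close> is
  killed by the cokernel of \<open>\<ell>\<^sub>2\<ell>\<^sub>1f\<close>, so it equals \<open>\<ell>\<^sub>2\<ell>\<^sub>1fz\<close> for some \<open>z\<close>, and
  \<open>(a - \<ell>\<^sub>1fz, b)\<close> is a pseudo-element of \<open>L \<times>\<^sub>M R\<close> with the same image in \<open>P\<close>. Hence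
  the comparison map \<open>L \<times>\<^sub>M R \<rightarrow> P\<close>, which is \<open>u\<close> composed with the cokernel of \<open>f\<close>,
  is epi, and so is \<open>u\<close>.
\<close>

lemma in_Hom [simp]: "f \<in> Hom C x y \<longleftrightarrow> f \<in> Ar C \<and> Dom C f = x \<and> Cod C f = y"
  by (simp add: Hom_def)

lemma ex1_unique: "\<exists>!x. P x \<Longrightarrow> P a \<Longrightarrow> P b \<Longrightarrow> a = b"
  by blast

section \<open>Categories\<close>

locale cat =
  fixes C :: "('o, 'a) acat"
  assumes category: "category C"
begin

abbreviation comp :: "'a \<Rightarrow> 'a \<Rightarrow> 'a"  (infixr "\<cdot>" 70)
  where "g \<cdot> f \<equiv> Comp C g f"

lemma Dom_in_Ob [simp]: "f \<in> Ar C \<Longrightarrow> Dom C f \<in> Ob C"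
  and Cod_in_Ob [simp]: "f \<in> Ar C \<Longrightarrow> Cod C f \<in> Ob C"
  using category unfolding category_def by auto

lemma comp_arr [simp]:
  assumes "f \<in> Ar C" "g \<in> Ar C" "Cod C f = Dom C g"
  shows "g \<cdot> f \<in> Ar C" "Dom C (g \<cdot> f) = Dom C f" "Cod C (g \<cdot> f) = Cod C g"
  using category assms unfolding category_def by auto

lemma comp_assoc [simp]:
  assumes "f \<in> Ar C" "g \<in> Ar C" "h \<in> Ar C" "Cod C f = Dom C g" "Cod C g = Dom C h"
  shows "(h \<cdot> g) \<cdot> f = h \<cdot> g \<cdot> f"
  using category assms unfolding category_def by metis

lemma comp_reassoc:
  assumes "h \<cdot> g = k" "g \<in> Ar C" "h \<in> Ar C" "Cod C g = Dom C h"
  shows "f \<in> Ar C \<Longrightarrow> Cod C f = Dom C g \<Longrightarrow> h \<cdot> g \<cdot> f = k \<cdot> f"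
  using assms comp_assoc by metis

lemma Idt_arr [simp]:
  assumes "x \<in> Ob C"
  shows "Idt C x \<in> Ar C" "Dom C (Idt C x) = x" "Cod C (Idt C x) = x"
  using category assms unfolding category_def by auto

lemma comp_Idt [simp]: "f \<in> Ar C \<Longrightarrow> Dom C f = x \<Longrightarrow> f \<cdot> Idt C x = f"
  and Idt_comp [simp]: "f \<in> Ar C \<Longrightarrow> Cod C f = y \<Longrightarrow> Idt C y \<cdot> f = f"
  using category unfolding category_def by auto

lemma Hom_Ob: "f \<in> Hom C x y \<Longrightarrow> x \<in> Ob C \<and> y \<in> Ob C"
  by auto

lemma epiD:
  assumes "is_epi C e" "g \<in> Hom C (Cod C e) z" "h \<in> Hom C (Cod C e) z" "g \<cdot> e = h \<cdot> e"
  shows "g = h"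
  using assms unfolding is_epi_def by auto

lemma epi_arr: "is_epi C e \<Longrightarrow> e \<in> Ar C"
  by (simp add: is_epi_def)

lemma epi_comp:
  assumes "is_epi C a" "is_epi C b" "Cod C b = Dom C a"
  shows "is_epi C (a \<cdot> b)"
  using assms epi_arr[OF assms(1)] epi_arr[OF assms(2)]
  unfolding is_epi_def by (metis comp_arr comp_assoc)

lemma epi_if_comp_epi:
  assumes "is_epi C (e \<cdot> i)" "e \<in> Ar C" "i \<in> Ar C" "Cod C i = Dom C e"
  shows "is_epi C e"
  using assms unfolding is_epi_def by (metis comp_arr comp_assoc)

lemma monoD:
  assumes "is_mono C m" "g \<in> Hom C x (Dom C m)" "h \<in> Hom C x (Dom C m)" "m \<cdot> g = m \<cdot> h"
  shows "g = h"
  using assms unfolding is_mono_def by auto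

lemma mono_comp:
  assumes "is_mono C a" "is_mono C b" "Cod C b = Dom C a"
  shows "is_mono C (a \<cdot> b)"
  using assms unfolding is_mono_def by (metis comp_arr comp_assoc)

lemma kernelD:
  assumes "is_kernel C f k"
  shows "f \<in> Ar C" "k \<in> Ar C" "Cod C k = Dom C f" "f \<cdot> k = Zer C (Dom C k) (Cod C f)"
  using assms unfolding is_kernel_def by auto

lemma kernel_universal:
  assumes "is_kernel C f k" "g \<in> Ar C" "Cod C g = Dom C f" "f \<cdot> g = Zer C (Dom C g) (Cod C f)"
  shows "\<exists>!h. h \<in> Hom C (Dom C g) (Dom C k) \<and> k \<cdot> h = g"
  by (rule assms(1)[unfolded is_kernel_def, THEN conjunct2, THEN conjunct2, THEN conjunct2,
        THEN conjunct2, rule_format, OF assms(2-4)])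

lemma kernel_lift:
  assumes "is_kernel C f k" "g \<in> Ar C" "Cod C g = Dom C f" "f \<cdot> g = Zer C (Dom C g) (Cod C f)"
  obtains h where "h \<in> Hom C (Dom C g) (Dom C k)" "k \<cdot> h = g"
  using kernel_universal[OF assms] by (elim ex1E conjE)

lemma cokernelD:
  assumes "is_cokernel C f c"
  shows "f \<in> Ar C" "c \<in> Ar C" "Dom C c = Cod C f" "c \<cdot> f = Zer C (Dom C f) (Cod C c)"
  using assms unfolding is_cokernel_def by auto

lemma cokernel_universal:
  assumes "is_cokernel C f c" "g \<in> Ar C" "Dom C g = Cod C f" "g \<cdot> f = Zer C (Dom C f) (Cod C g)"
  shows "\<exists>!h. h \<in> Hom C (Cod C c) (Cod C g) \<and> h \<cdot> c = g"
  by (rule assms(1)[unfolded is_cokernel_def, THEN conjunct2, THEN conjunct2, THEN conjunct2,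
        THEN conjunct2, rule_format, OF assms(2-4)])

lemma cokernel_desc:
  assumes "is_cokernel C f c" "g \<in> Ar C" "Dom C g = Cod C f" "g \<cdot> f = Zer C (Dom C f) (Cod C g)"
  obtains h where "h \<in> Hom C (Cod C c) (Cod C g)" "h \<cdot> c = g"
  using cokernel_universal[OF assms] by (elim ex1E conjE)

lemma is_pullbackD:
  assumes "is_pullback C l2 r2 l1 r1"
  shows "l1 \<in> Hom C (Dom C l1) (Dom C l2)" "r1 \<in> Hom C (Dom C l1) (Dom C r2)"
    "l2 \<in> Hom C (Dom C l2) (Cod C l2)" "r2 \<in> Hom C (Dom C r2) (Cod C l2)"
    "l2 \<cdot> l1 = r2 \<cdot> r1"
  using assms unfolding is_pullback_def by auto

lemma pullback_universal:
  assumes "is_pullback C l2 r2 l1 r1" "a \<in> Ar C" "b \<in> Ar C" "Dom C a = Dom C b"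
    "Cod C a = Dom C l2" "Cod C b = Dom C r2" "l2 \<cdot> a = r2 \<cdot> b"
  shows "\<exists>!h. h \<in> Hom C (Dom C a) (Dom C l1) \<and> l1 \<cdot> h = a \<and> r1 \<cdot> h = b"
  by (rule assms(1)[unfolded is_pullback_def, THEN conjunct2, THEN conjunct2, THEN conjunct2,
        THEN conjunct2, THEN conjunct2, THEN conjunct2, THEN conjunct2, THEN conjunct2,
        THEN conjunct2, rule_format, OF assms(2-7)])

lemma pullback_lift:
  assumes "is_pullback C l2 r2 l1 r1" "a \<in> Hom C w (Dom C l2)" "b \<in> Hom C w (Dom C r2)"
    "l2 \<cdot> a = r2 \<cdot> b"
  obtains h where "h \<in> Hom C w (Dom C l1)" "l1 \<cdot> h = a" "r1 \<cdot> h = b"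
proof -
  have "a \<in> Ar C" "b \<in> Ar C" "Dom C a = Dom C b" "Cod C a = Dom C l2" "Cod C b = Dom C r2"
    and w: "Dom C a = w"
    using assms(2,3) by simp_all
  from pullback_universal[OF assms(1) this(1-5) assms(4)] show ?thesis
    unfolding w using that by (elim ex1E conjE)
qed

lemma pullback_arr_eq:
  assumes "is_pullback C l2 r2 l1 r1" "g \<in> Hom C w (Dom C l1)" "h \<in> Hom C w (Dom C l1)"
    "l1 \<cdot> g = l1 \<cdot> h" "r1 \<cdot> g = r1 \<cdot> h"
  shows "g = h"
proof -
  note pb = is_pullbackD[OF assms(1)]
  have "l1 \<cdot> g \<in> Ar C" "r1 \<cdot> g \<in> Ar C" "Dom C (l1 \<cdot> g) = Dom C (r1 \<cdot> g)"
    "Cod C (l1 \<cdot> g) = Dom C l2" "Cod C (r1 \<cdot> g) = Dom C r2" "l2 \<cdot> l1 \<cdot> g = r2 \<cdot> r1 \<cdot> g"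
    using pb assms(2) comp_assoc[of g l1 l2] comp_assoc[of g r1 r2] by (auto simp del: comp_assoc)
  from pullback_universal[OF assms(1) this] show ?thesis
    by (rule ex1_unique) (use assms pb in simp_all)
qed

lemma product_projections:
  assumes "is_product C x y p q"
  shows "p \<in> Hom C (Dom C p) x" "q \<in> Hom C (Dom C p) y"
  using assms unfolding is_product_def by auto

lemma product_pair:
  assumes "is_product C x y p q" "a \<in> Hom C w x" "b \<in> Hom C w y"
  obtains h where "h \<in> Hom C w (Dom C p)" "p \<cdot> h = a" "q \<cdot> h = b"
proof -
  have "a \<in> Ar C" "b \<in> Ar C" "Dom C a = Dom C b" "Cod C a = x" "Cod C b = y" and w: "Dom C a = w"
    using assms(2,3) by simp_all
  from assms(1)[unfolded is_product_def, THEN conjunct2, THEN conjunct2, THEN conjunct2,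
      THEN conjunct2, THEN conjunct2, rule_format, OF this(1-5)]
  show ?thesis
    unfolding w using that by (elim ex1E conjE)
qed

end

section \<open>Preadditive categories\<close>

locale preadditive_category =
  fixes C :: "('o, 'a) acat"
  assumes preadditive: "preadditive C"

sublocale preadditive_category \<subseteq> cat
  using preadditive by unfold_locales (simp add: preadditive_def)

context preadditive_category
begin

lemma Zer_arr [simp]:
  assumes "x \<in> Ob C" "y \<in> Ob C"
  shows "Zer C x y \<in> Ar C" "Dom C (Zer C x y) = x" "Cod C (Zer C x y) = y"
  using preadditive assms unfolding preadditive_def by auto

lemma Add_Hom:
  assumes "f \<in> Hom C x y" "g \<in> Hom C x y"
  shows "Add C f g \<in> Hom C x y"
  using preadditive Hom_Ob[OF assms(1)] assms unfolding preadditive_def by blast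

lemma Add_arr [simp]:
  assumes "f \<in> Ar C" "g \<in> Ar C" "Dom C g = Dom C f" "Cod C g = Cod C f"
  shows "Add C f g \<in> Ar C" "Dom C (Add C f g) = Dom C f" "Cod C (Add C f g) = Cod C f"
  using Add_Hom[of f "Dom C f" "Cod C f" g] assms by auto

lemma Add_assoc:
  assumes "f \<in> Hom C x y" "g \<in> Hom C x y" "h \<in> Hom C x y"
  shows "Add C (Add C f g) h = Add C f (Add C g h)"
  using preadditive Hom_Ob[OF assms(1)] assms unfolding preadditive_def by blast

lemma Add_commute:
  assumes "f \<in> Hom C x y" "g \<in> Hom C x y"
  shows "Add C f g = Add C g f"
  using preadditive Hom_Ob[OF assms(1)] assms unfolding preadditive_def by blast

lemma Add_Zer [simp]: "f \<in> Hom C x y \<Longrightarrow> Add C f (Zer C x y) = f"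
  using preadditive Hom_Ob unfolding preadditive_def by blast

lemma Zer_Add [simp]: "f \<in> Hom C x y \<Longrightarrow> Add C (Zer C x y) f = f"
  using Add_commute[of "Zer C x y" x y f] Hom_Ob[of f x y] by simp

lemma Add_inverse: "f \<in> Hom C x y \<Longrightarrow> \<exists>g \<in> Hom C x y. Add C f g = Zer C x y"
  using preadditive Hom_Ob unfolding preadditive_def by blast

lemma comp_Add:
  assumes "f \<in> Hom C x y" "g \<in> Hom C x y" "h \<in> Hom C y z"
  shows "h \<cdot> Add C f g = Add C (h \<cdot> f) (h \<cdot> g)"
  using preadditive Hom_Ob[OF assms(1)] Hom_Ob[OF assms(3)] assms
  unfolding preadditive_def by blast

lemma Add_comp:
  assumes "f \<in> Hom C x y" "g \<in> Hom C y z" "h \<in> Hom C y z"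
  shows "Add C g h \<cdot> f = Add C (g \<cdot> f) (h \<cdot> f)"
  using preadditive Hom_Ob[OF assms(1)] Hom_Ob[OF assms(3)] assms
  unfolding preadditive_def by blast

lemma Add_right_cancel:
  assumes "a \<in> Hom C x y" "b \<in> Hom C x y" "c \<in> Hom C x y" "Add C a c = Add C b c"
  shows "a = b"
proof -
  obtain n where n: "n \<in> Hom C x y" "Add C c n = Zer C x y"
    using Add_inverse[OF assms(3)] by blast
  have "a = Add C (Add C a c) n"
    using assms(1,3) n by (simp add: Add_assoc)
  also have "\<dots> = Add C (Add C b c) n"
    by (simp only: assms(4))
  also have "\<dots> = b"
    using assms(2,3) n by (simp add: Add_assoc)
  finally show ?thesis .
qed

definition diff :: "'a \<Rightarrow> 'a \<Rightarrow> 'a"  (infixl "\<ominus>" 65)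
  where "f \<ominus> g = (SOME h. h \<in> Hom C (Dom C f) (Cod C f) \<and> Add C h g = f)"

lemma diff_Hom:
  assumes "f \<in> Hom C x y" "g \<in> Hom C x y"
  shows "f \<ominus> g \<in> Hom C x y" "Add C (f \<ominus> g) g = f"
proof -
  obtain n where n: "n \<in> Hom C x y" "Add C g n = Zer C x y"
    using Add_inverse[OF assms(2)] by blast
  have "Add C (Add C f n) g = f"
    using assms n by (simp add: Add_assoc Add_commute[of n x y g])
  then have "\<exists>h. h \<in> Hom C x y \<and> Add C h g = f"
    using assms n Add_Hom by blast
  from someI_ex[OF this] show "f \<ominus> g \<in> Hom C x y" "Add C (f \<ominus> g) g = f"
    using assms(1) by (simp_all add: diff_def)
qed

lemma diff_arr [simp]:
  assumes "f \<in> Ar C" "g \<in> Ar C" "Dom C g = Dom C f" "Cod C g = Cod C f"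
  shows "f \<ominus> g \<in> Ar C" "Dom C (f \<ominus> g) = Dom C f" "Cod C (f \<ominus> g) = Cod C f"
  using diff_Hom(1)[of f "Dom C f" "Cod C f" g] assms by auto

lemma diff_eq_iff:
  assumes "f \<in> Hom C x y" "g \<in> Hom C x y" "h \<in> Hom C x y"
  shows "f \<ominus> g = h \<longleftrightarrow> Add C h g = f"
  using diff_Hom[OF assms(1,2)] Add_right_cancel[OF assms(3) diff_Hom(1)[OF assms(1,2)] assms(2)]
  by metis

lemma diff_self [simp]: "f \<in> Ar C \<Longrightarrow> f \<ominus> f = Zer C (Dom C f) (Cod C f)"
  using diff_eq_iff[of f "Dom C f" "Cod C f" f "Zer C (Dom C f) (Cod C f)"] by simp

lemma diff_Zer [simp]: "f \<in> Hom C x y \<Longrightarrow> f \<ominus> Zer C x y = f"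
  using diff_eq_iff[of f x y "Zer C x y" f] Hom_Ob[of f x y] by simp

lemma eq_if_diff_eq_Zer:
  assumes "f \<in> Hom C x y" "g \<in> Hom C x y" "f \<ominus> g = Zer C x y"
  shows "f = g"
  using diff_eq_iff[of f x y g "Zer C x y"] Hom_Ob[OF assms(1)] assms by simp

lemma diff_diff_cancel:
  assumes "f \<in> Hom C x y" "g \<in> Hom C x y"
  shows "f \<ominus> (f \<ominus> g) = g"
  using diff_eq_iff[OF assms(1) diff_Hom(1)[OF assms] assms(2)] diff_Hom[OF assms]
    Add_commute[OF assms(2) diff_Hom(1)[OF assms]]
  by simp

lemma comp_Zer [simp]:
  assumes "f \<in> Ar C" "Dom C f = y" "x \<in> Ob C"
  shows "f \<cdot> Zer C x y = Zer C x (Cod C f)"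
proof -
  have "Add C (f \<cdot> Zer C x y) (f \<cdot> Zer C x y) = Add C (Zer C x (Cod C f)) (f \<cdot> Zer C x y)"
    using comp_Add[of "Zer C x y" x y "Zer C x y" f "Cod C f"] assms Dom_in_Ob[of f]
    by (simp add: Zer_Add[of "f \<cdot> Zer C x y" x "Cod C f"])
  then show ?thesis
    by (rule Add_right_cancel[of _ x "Cod C f", rotated 3]) (use assms in auto)
qed

lemma Zer_comp [simp]:
  assumes "f \<in> Ar C" "Cod C f = y" "z \<in> Ob C"
  shows "Zer C y z \<cdot> f = Zer C (Dom C f) z"
proof -
  have "Add C (Zer C y z \<cdot> f) (Zer C y z \<cdot> f) = Add C (Zer C (Dom C f) z) (Zer C y z \<cdot> f)"
    using Add_comp[of f "Dom C f" y "Zer C y z" z "Zer C y z"] assms Cod_in_Ob[of f]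
    by (simp add: Zer_Add[of "Zer C y z \<cdot> f" "Dom C f" z])
  then show ?thesis
    by (rule Add_right_cancel[of _ "Dom C f" z, rotated 3]) (use assms in auto)
qed

lemma comp_diff:
  assumes "f \<in> Hom C x y" "g \<in> Hom C x y" "h \<in> Hom C y z"
  shows "h \<cdot> (f \<ominus> g) = h \<cdot> f \<ominus> h \<cdot> g"
  using diff_eq_iff[of "h \<cdot> f" x z "h \<cdot> g" "h \<cdot> (f \<ominus> g)"] diff_Hom[OF assms(1,2)]
    comp_Add[of "f \<ominus> g" x y g h z] assms
  by simp

lemma diff_comp:
  assumes "f \<in> Hom C x y" "g \<in> Hom C y z" "h \<in> Hom C y z"
  shows "(g \<ominus> h) \<cdot> f = g \<cdot> f \<ominus> h \<cdot> f"
  using diff_eq_iff[of "g \<cdot> f" x z "h \<cdot> f" "(g \<ominus> h) \<cdot> f"] diff_Hom[OF assms(2,3)]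
    Add_comp[of f x y "g \<ominus> h" z h] assms
  by simp

lemma comp_diff_eqI:
  assumes "a \<in> Hom C x y" "b \<in> Hom C x y" "l \<in> Hom C y z" "c \<in> Hom C x z"
    and "l \<cdot> a \<ominus> c = l \<cdot> b"
  shows "l \<cdot> (a \<ominus> b) = c"
  using comp_diff[OF assms(1-3)] diff_diff_cancel[of "l \<cdot> a" x z c] assms by simp

lemma epi_Zer_cancel:
  assumes "is_epi C e" "t \<in> Hom C (Cod C e) z" "t \<cdot> e = Zer C (Dom C e) z"
  shows "t = Zer C (Cod C e) z"
  using epiD[OF assms(1,2), of "Zer C (Cod C e) z"] assms epi_arr[OF assms(1)] by auto

lemma epiI_Zer:
  assumes "e \<in> Ar C"
    and "\<And>t z. t \<in> Hom C (Cod C e) z \<Longrightarrow> t \<cdot> e = Zer C (Dom C e) z \<Longrightarrow> t = Zer C (Cod C e) z"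
  shows "is_epi C e"
  unfolding is_epi_def
proof (intro conjI ballI impI assms(1))
  fix g h
  assume "g \<in> Ar C" "h \<in> Ar C" "Cod C g = Cod C h" "Dom C g = Cod C e" "Dom C h = Cod C e"
    and eq: "g \<cdot> e = h \<cdot> e"
  then have g: "g \<in> Hom C (Cod C e) (Cod C g)" and h: "h \<in> Hom C (Cod C e) (Cod C g)"
    by simp_all
  have "(g \<ominus> h) \<cdot> e = Zer C (Dom C e) (Cod C g)"
    using diff_comp[of e "Dom C e" "Cod C e" g "Cod C g" h] g h eq assms(1) by simp
  then have "g \<ominus> h = Zer C (Cod C e) (Cod C g)"
    using assms(2) diff_Hom(1)[OF g h] by blast
  then show "g = h"
    using eq_if_diff_eq_Zer[OF g h] by blast
qed

lemma kernel_mono: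
  assumes "is_kernel C f k"
  shows "is_mono C k"
  unfolding is_mono_def
proof (intro conjI ballI impI kernelD(2)[OF assms])
  fix g h
  assume g: "g \<in> Ar C" "Cod C g = Dom C k" and h: "h \<in> Ar C" "Cod C h = Dom C k"
    and gh: "Dom C g = Dom C h" "k \<cdot> g = k \<cdot> h"
  have "k \<cdot> g \<in> Ar C" "Cod C (k \<cdot> g) = Dom C f" "f \<cdot> k \<cdot> g = Zer C (Dom C (k \<cdot> g)) (Cod C f)"
    using kernelD[OF assms] g comp_assoc[of g k f, symmetric] by simp_all
  from kernel_universal[OF assms this] show "g = h"
    by (rule ex1_unique) (use g h gh kernelD[OF assms] in simp_all)
qed

lemma cokernel_epi:
  assumes "is_cokernel C f c"
  shows "is_epi C c"
  unfolding is_epi_def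
proof (intro conjI ballI impI cokernelD(2)[OF assms])
  fix g h
  assume g: "g \<in> Ar C" "Dom C g = Cod C c" and h: "h \<in> Ar C" "Dom C h = Cod C c"
    and gh: "Cod C g = Cod C h" "g \<cdot> c = h \<cdot> c"
  have "g \<cdot> c \<in> Ar C" "Dom C (g \<cdot> c) = Cod C f" "(g \<cdot> c) \<cdot> f = Zer C (Dom C f) (Cod C (g \<cdot> c))"
    using cokernelD[OF assms] g by simp_all
  from cokernel_universal[OF assms this] show "g = h"
    by (rule ex1_unique) (use g h gh cokernelD[OF assms] in simp_all)
qed

lemma product_injections:
  assumes pq: "is_product C x y p q"
  obtains i j where "i \<in> Hom C x (Dom C p)" "p \<cdot> i = Idt C x" "q \<cdot> i = Zer C x y"
    and "j \<in> Hom C y (Dom C p)" "p \<cdot> j = Zer C y x" "q \<cdot> j = Idt C y"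
proof -
  have "x \<in> Ob C" "y \<in> Ob C"
    using product_projections[OF pq] by auto
  then have "Idt C x \<in> Hom C x x" "Zer C x y \<in> Hom C x y" "Zer C y x \<in> Hom C y x" "Idt C y \<in> Hom C y y"
    by simp_all
  then show ?thesis
    using that by (metis product_pair[OF pq])
qed

lemma product_difference_injections:
  assumes pq: "is_product C (Dom C e) (Dom C g) p q"
    and e: "e \<in> Ar C" and g: "g \<in> Ar C" "Cod C g = Cod C e"
  obtains i j where "i \<in> Hom C (Dom C e) (Dom C p)" "q \<cdot> i = Zer C (Dom C e) (Dom C g)"
    "(e \<cdot> p \<ominus> g \<cdot> q) \<cdot> i = e" "j \<in> Hom C (Dom C g) (Dom C p)" "q \<cdot> j = Idt C (Dom C g)"
proof -
  note P = product_projections[OF pq]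
  obtain i j where i: "i \<in> Hom C (Dom C e) (Dom C p)" "p \<cdot> i = Idt C (Dom C e)"
      "q \<cdot> i = Zer C (Dom C e) (Dom C g)"
    and j: "j \<in> Hom C (Dom C g) (Dom C p)" "q \<cdot> j = Idt C (Dom C g)"
    by (rule product_injections[OF pq])
  define d where "d = e \<cdot> p \<ominus> g \<cdot> q"
  have "d \<cdot> i = e"
    unfolding d_def using diff_comp[of i "Dom C e" "Dom C p" "e \<cdot> p" "Cod C e" "g \<cdot> q"] P i e g
    by simp
  then show ?thesis
    using that[of i j] i j unfolding d_def by blast
qed

lemma product_difference_epi:
  assumes pq: "is_product C (Dom C e) (Dom C g) p q"
    and e: "is_epi C e" and g: "g \<in> Ar C" "Cod C g = Cod C e"
  shows "is_epi C (e \<cdot> p \<ominus> g \<cdot> q)"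
proof -
  note P = product_projections[OF pq] and e_arr = epi_arr[OF e]
  obtain i j where i: "i \<in> Hom C (Dom C e) (Dom C p)" "q \<cdot> i = Zer C (Dom C e) (Dom C g)"
    and di: "(e \<cdot> p \<ominus> g \<cdot> q) \<cdot> i = e"
    and "j \<in> Hom C (Dom C g) (Dom C p)" "q \<cdot> j = Idt C (Dom C g)"
    by (rule product_difference_injections[OF pq e_arr g])
  have "is_epi C ((e \<cdot> p \<ominus> g \<cdot> q) \<cdot> i)"
    using e by (simp only: di)
  then show ?thesis
    by (rule epi_if_comp_epi) (use P i(1) e_arr g in simp_all)
qed

end

section \<open>Abelian categories\<close>

locale abelian_category =
  fixes C :: "('o, 'a) acat"
  assumes abelian: "abelian C"

sublocale abelian_category \<subseteq> preadditive_category
  using abelian by unfold_locales (simp add: abelian_def additive_def)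

context abelian_category
begin

lemma kernel_exists: "f \<in> Ar C \<Longrightarrow> \<exists>k. is_kernel C f k"
  using abelian unfolding abelian_def by blast

lemma mono_is_kernel: "is_mono C m \<Longrightarrow> \<exists>f. is_kernel C f m"
  using abelian unfolding abelian_def by blast

lemma epi_is_cokernel: "is_epi C e \<Longrightarrow> \<exists>f. is_cokernel C f e"
  using abelian unfolding abelian_def by blast

lemma product_exists: "x \<in> Ob C \<Longrightarrow> y \<in> Ob C \<Longrightarrow> \<exists>p q. is_product C x y p q"
  using abelian unfolding abelian_def additive_def by blast

lemma epi_is_cokernel_of_kernel:
  assumes e: "is_epi C e" and k: "is_kernel C e k"
  shows "is_cokernel C k e"
proof -
  obtain f where f: "is_cokernel C f e"
    using epi_is_cokernel[OF e] by blast
  note F = cokernelD[OF f] and K = kernelD[OF k]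
  obtain f' where f': "f' \<in> Hom C (Dom C f) (Dom C k)" "k \<cdot> f' = f"
    using kernel_lift[OF k F(1)] F by auto
  show ?thesis
    unfolding is_cokernel_def
  proof (intro conjI ballI impI K(2) F(2))
    fix g
    assume g: "g \<in> Ar C" "Dom C g = Cod C k" "g \<cdot> k = Zer C (Dom C k) (Cod C g)"
    have "g \<cdot> f = (g \<cdot> k) \<cdot> f'"
      using f' g(1,2) K by simp
    also have "\<dots> = Zer C (Dom C f) (Cod C g)"
      using f' g K by (simp del: comp_assoc)
    finally obtain h where h: "h \<in> Hom C (Cod C e) (Cod C g)" "h \<cdot> e = g"
      using cokernel_desc[OF f g(1)] g F K by auto
    show "\<exists>!h. h \<in> Hom C (Cod C e) (Cod C g) \<and> h \<cdot> e = g"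
    proof (rule ex1I)
      show "h \<in> Hom C (Cod C e) (Cod C g) \<and> h \<cdot> e = g"
        using h by simp
      fix h' assume "h' \<in> Hom C (Cod C e) (Cod C g) \<and> h' \<cdot> e = g"
      then show "h' = h"
        using epiD[OF e _ h(1), of h'] h(2) by simp
    qed
  qed (use K F in simp_all)
qed

text \<open>
  If \<open>t \<cdot> q \<cdot> k = 0\<close>, then \<open>t \<cdot> q\<close> factors through \<open>e \<cdot> p \<ominus> g \<cdot> q\<close>, the cokernel of its
  kernel \<open>k\<close>; composing with the injection of \<open>Dom e\<close> shows that the factor vanishes on the
  epi \<open>e\<close>. So \<open>t \<cdot> q = 0\<close>, and \<open>t = 0\<close> because \<open>q\<close> is split epi.
\<close>

lemma product_difference_kernel_epi:
  assumes pq: "is_product C (Dom C e) (Dom C g) p q"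
    and e: "is_epi C e" and g: "g \<in> Ar C" "Cod C g = Cod C e"
    and k: "is_kernel C (e \<cdot> p \<ominus> g \<cdot> q) k"
  shows "is_epi C (q \<cdot> k)"
proof -
  define d where "d = e \<cdot> p \<ominus> g \<cdot> q"
  note P = product_projections[OF pq] and e_arr = epi_arr[OF e] and K = kernelD[OF k, folded d_def]
  obtain i j where i: "i \<in> Hom C (Dom C e) (Dom C p)" "q \<cdot> i = Zer C (Dom C e) (Dom C g)"
    and di: "d \<cdot> i = e" and j: "j \<in> Hom C (Dom C g) (Dom C p)" "q \<cdot> j = Idt C (Dom C g)"
    by (rule product_difference_injections[OF pq e_arr g, folded d_def])
  have d: "d \<in> Hom C (Dom C p) (Cod C e)"
    unfolding d_def using P e_arr g by simp
  have qk: "q \<cdot> k \<in> Hom C (Dom C k) (Dom C g)"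
    using K d P by simp
  show ?thesis
  proof (rule epiI_Zer)
    fix t z
    assume "t \<in> Hom C (Cod C (q \<cdot> k)) z" "t \<cdot> q \<cdot> k = Zer C (Dom C (q \<cdot> k)) z"
    moreover have "Cod C (q \<cdot> k) = Dom C g" "Dom C (q \<cdot> k) = Dom C k"
      using qk by simp_all
    ultimately have t: "t \<in> Hom C (Dom C g) z" "t \<cdot> q \<cdot> k = Zer C (Dom C k) z"
      by simp_all
    have tq: "t \<cdot> q \<in> Ar C" "Dom C (t \<cdot> q) = Cod C k" "(t \<cdot> q) \<cdot> k = Zer C (Dom C k) (Cod C (t \<cdot> q))"
      using t K d P by simp_all
    obtain s where s: "s \<in> Hom C (Cod C d) z" "s \<cdot> d = t \<cdot> q"
      using cokernel_desc[OF epi_is_cokernel_of_kernel[OF _ k, folded d_def] tq] t P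
        product_difference_epi[OF pq e g, folded d_def] by auto
    have "s \<cdot> e = (t \<cdot> q) \<cdot> i"
      using comp_reassoc[OF s(2), of i] s d i by (simp add: di)
    also have "\<dots> = Zer C (Dom C e) z"
      using t P i e_arr by simp
    finally have "s = Zer C (Cod C e) z"
      using epi_Zer_cancel[OF e, of s] s d by simp
    then have tq0: "t \<cdot> q = Zer C (Dom C p) z"
      using s(2)[symmetric] d Hom_Ob[OF t(1)] by simp
    have "t = (t \<cdot> q) \<cdot> j"
      using j t P by simp
    also have "\<dots> = Zer C (Dom C g) z"
      using tq0 j Hom_Ob[OF t(1)] by (simp del: comp_assoc)
    finally show "t = Zer C (Cod C (q \<cdot> k)) z"
      using qk by simp
  qed (use qk in simp)
qed

text \<open>The pullback of \<open>e\<close> along \<open>g\<close> is the kernel of \<open>e \<cdot> p \<ominus> g \<cdot> q\<close> on \<open>Dom e \<oplus> Dom g\<close>.\<close>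

lemma epi_pullback_cover:
  assumes e: "is_epi C e" and g: "g \<in> Ar C" "Cod C g = Cod C e"
  obtains s t where "is_epi C s" "Cod C s = Dom C g" "t \<in> Hom C (Dom C s) (Dom C e)"
    "e \<cdot> t = g \<cdot> s"
proof -
  note e_arr = epi_arr[OF e]
  obtain p q where pq: "is_product C (Dom C e) (Dom C g) p q"
    using product_exists e_arr g by (meson Dom_in_Ob)
  note P = product_projections[OF pq]
  have "e \<cdot> p \<ominus> g \<cdot> q \<in> Ar C"
    using P e_arr g by simp
  then obtain k where k: "is_kernel C (e \<cdot> p \<ominus> g \<cdot> q) k"
    using kernel_exists by blast
  note K = kernelD[OF k]
  have "e \<cdot> p \<cdot> k \<ominus> g \<cdot> q \<cdot> k = Zer C (Dom C k) (Cod C e)"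
    using K diff_comp[of k "Dom C k" "Dom C p" "e \<cdot> p" "Cod C e" "g \<cdot> q"] P e_arr g by simp
  then have "e \<cdot> p \<cdot> k = g \<cdot> q \<cdot> k"
    using eq_if_diff_eq_Zer[of "e \<cdot> p \<cdot> k" "Dom C k" "Cod C e"] K P e_arr g by simp
  then show ?thesis
    using that[OF product_difference_kernel_epi[OF pq e g k], of "p \<cdot> k"] K P e_arr g by simp
qed

lemma kernel_of_cokernel_factor_through_mono:
  assumes h: "is_cokernel C h c" and k: "is_kernel C c k"
    and m: "is_mono C m" and g: "g \<in> Hom C (Dom C h) (Dom C m)" and mg: "m \<cdot> g = h"
  obtains r where "r \<in> Hom C (Dom C k) (Dom C m)" "m \<cdot> r = k"
proof -
  note H = cokernelD[OF h] and K = kernelD[OF k]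
  obtain y where y: "is_kernel C y m"
    using mono_is_kernel[OF m] by (elim exE)
  note Y = kernelD[OF y]
  have "y \<cdot> h = (y \<cdot> m) \<cdot> g"
    using g Y(1-3) by (simp flip: mg)
  also have "\<dots> = Zer C (Dom C m) (Cod C y) \<cdot> g"
    by (simp only: Y(4))
  also have "\<dots> = Zer C (Dom C h) (Cod C y)"
    using Y(1-3) g by simp
  finally have yh: "y \<cdot> h = Zer C (Dom C h) (Cod C y)" .
  have "Dom C y = Cod C h"
  proof -
    have "Cod C (m \<cdot> g) = Cod C m"
      using g Y(2) by simp
    then show ?thesis
      using Y(3) by (simp only: mg)
  qed
  then obtain y' where y': "y' \<in> Hom C (Cod C c) (Cod C y)" and y'c: "y' \<cdot> c = y"
    by (rule cokernel_desc[OF h Y(1) _ yh])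
  have "y \<cdot> k = (y' \<cdot> c) \<cdot> k"
    by (simp only: y'c)
  also have "\<dots> = Zer C (Dom C k) (Cod C y)"
    using y' H K by simp
  finally have "y \<cdot> k = Zer C (Dom C k) (Cod C y)" .
  moreover have "Cod C k = Dom C y"
  proof -
    have "Dom C (y' \<cdot> c) = Dom C c"
      using y' H(2) by simp
    then show ?thesis
      using K(3) by (simp only: y'c)
  qed
  ultimately show ?thesis
    using kernel_lift[OF y K(2)] that by blast
qed

text \<open>
  With \<open>j\<close> a kernel of \<open>t\<close>, the mono \<open>k \<cdot> j\<close> still receives \<open>h\<close>, so the kernel \<open>k\<close> of the
  cokernel of \<open>h\<close> factors through it. Hence \<open>j\<close> is split epi and \<open>t \<cdot> j = 0\<close> forces \<open>t = 0\<close>.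
\<close>

lemma kernel_of_cokernel_factor_epi:
  assumes h: "is_cokernel C h c" and k: "is_kernel C c k"
    and e: "e \<in> Hom C (Dom C h) (Dom C k)" and keh: "k \<cdot> e = h"
  shows "is_epi C e"
proof (rule epiI_Zer)
  note K = kernelD[OF k]
  show "e \<in> Ar C"
    using e by simp
  fix t z
  assume t: "t \<in> Hom C (Cod C e) z" and te: "t \<cdot> e = Zer C (Dom C e) z"
  obtain j where j: "is_kernel C t j"
    using kernel_exists t by auto
  note J = kernelD[OF j]
  have "e \<in> Ar C" "Cod C e = Dom C t" "t \<cdot> e = Zer C (Dom C e) (Cod C t)"
    using e t te by simp_all
  then obtain e' where e': "e' \<in> Hom C (Dom C e) (Dom C j)" and je: "j \<cdot> e' = e"
    by (rule kernel_lift[OF j])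
  have kj: "is_mono C (k \<cdot> j)"
    using mono_comp[OF kernel_mono[OF k] kernel_mono[OF j]] J t e by simp
  have kjh: "(k \<cdot> j) \<cdot> e' = h"
    using e e' J(1-3) K t by (simp add: je keh)
  obtain r where r: "r \<in> Hom C (Dom C k) (Dom C (k \<cdot> j))" and kjr: "(k \<cdot> j) \<cdot> r = k"
    by (rule kernel_of_cokernel_factor_through_mono[OF h k kj _ kjh]) (use e e' J K t in simp)
  have "k \<cdot> j \<cdot> r = k \<cdot> Idt C (Dom C k)"
    using r J K t e kjr by simp
  then have jr: "j \<cdot> r = Idt C (Dom C k)"
    using monoD[OF kernel_mono[OF k], of "j \<cdot> r" "Dom C k" "Idt C (Dom C k)"] r J K t e by simp
  have "t = (t \<cdot> j) \<cdot> r"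
    using r J(1-3) K t e by (simp add: jr)
  also have "\<dots> = Zer C (Cod C e) z"
    using r J K t e Hom_Ob[OF t] by (simp del: comp_assoc)
  finally show "t = Zer C (Cod C e) z" .
qed

lemma cokernel_Zer_factor_cover:
  assumes h: "is_cokernel C h c"
    and d: "d \<in> Ar C" "Cod C d = Cod C h" "c \<cdot> d = Zer C (Dom C d) (Cod C c)"
  obtains s z where "is_epi C s" "Cod C s = Dom C d" "z \<in> Hom C (Dom C s) (Dom C h)" "d \<cdot> s = h \<cdot> z"
proof -
  note H = cokernelD[OF h]
  obtain k where k: "is_kernel C c k"
    using kernel_exists[OF H(2)] by (elim exE)
  note K = kernelD[OF k]
  have "Cod C h = Dom C c" "Cod C d = Dom C c"
    using H d by simp_all
  obtain e where e: "e \<in> Hom C (Dom C h) (Dom C k)" and keh: "k \<cdot> e = h"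
    by (rule kernel_lift[OF k H(1) \<open>Cod C h = Dom C c\<close> H(4)])
  obtain d' where d': "d' \<in> Hom C (Dom C d) (Dom C k)" and kd: "k \<cdot> d' = d"
    by (rule kernel_lift[OF k d(1) \<open>Cod C d = Dom C c\<close> d(3)])
  have "d' \<in> Ar C" "Cod C d' = Cod C e"
    using d' e by simp_all
  then obtain s z where s: "is_epi C s" "Cod C s = Dom C d'" "z \<in> Hom C (Dom C s) (Dom C e)"
    and ez: "e \<cdot> z = d' \<cdot> s"
    by (rule epi_pullback_cover[OF kernel_of_cokernel_factor_epi[OF h k e keh]])
  have "d \<cdot> s = k \<cdot> d' \<cdot> s"
    by (rule comp_reassoc[OF kd, symmetric]) (use d' s epi_arr[OF s(1)] K in simp_all)
  also have "\<dots> = k \<cdot> e \<cdot> z"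
    by (simp only: ez)
  also have "\<dots> = h \<cdot> z"
    by (rule comp_reassoc[OF keh]) (use e s epi_arr[OF s(1)] K in simp_all)
  finally have "d \<cdot> s = h \<cdot> z" .
  then show ?thesis
    using that[OF s(1)] s(2,3) d' e by simp
qed

lemma epi_pair_cover:
  assumes e1: "is_epi C e1" and e2: "is_epi C e2"
    and p1: "p1 \<in> Hom C w (Cod C e1)" and p2: "p2 \<in> Hom C w (Cod C e2)"
  obtains s a b where "is_epi C s" "Cod C s = w"
    "a \<in> Hom C (Dom C s) (Dom C e1)" "b \<in> Hom C (Dom C s) (Dom C e2)"
    "e1 \<cdot> a = p1 \<cdot> s" "e2 \<cdot> b = p2 \<cdot> s"
proof -
  have "p1 \<in> Ar C" "Cod C p1 = Cod C e1"
    using p1 by simp_all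
  then obtain s1 a where s1: "is_epi C s1" "Cod C s1 = Dom C p1"
    and a: "a \<in> Hom C (Dom C s1) (Dom C e1)" and e1a: "e1 \<cdot> a = p1 \<cdot> s1"
    by (rule epi_pullback_cover[OF e1])
  note s1_arr = epi_arr[OF s1(1)]
  have "p2 \<cdot> s1 \<in> Ar C" "Cod C (p2 \<cdot> s1) = Cod C e2"
    using p1 p2 s1 s1_arr by simp_all
  then obtain s2 b where s2: "is_epi C s2" "Cod C s2 = Dom C (p2 \<cdot> s1)"
    and b: "b \<in> Hom C (Dom C s2) (Dom C e2)" and e2b: "e2 \<cdot> b = (p2 \<cdot> s1) \<cdot> s2"
    by (rule epi_pullback_cover[OF e2])
  note s2_arr = epi_arr[OF s2(1)]
  have "is_epi C (s1 \<cdot> s2)"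
    using epi_comp[OF s1(1) s2(1)] p1 p2 s1 s1_arr s2 by simp
  moreover have "e1 \<cdot> a \<cdot> s2 = p1 \<cdot> s1 \<cdot> s2"
    using comp_reassoc[OF e1a, of s2] p1 p2 a s1 s1_arr s2 s2_arr epi_arr[OF e1] by simp
  moreover have "e2 \<cdot> b = p2 \<cdot> s1 \<cdot> s2"
    using e2b p1 p2 s1 s1_arr s2 s2_arr by simp
  ultimately show ?thesis
    using that[of "s1 \<cdot> s2" "a \<cdot> s2" b] p1 p2 a b s1 s1_arr s2 s2_arr by simp
qed

lemma pullback_lift_modulo_image:
  assumes pb: "is_pullback C l2 r2 l1 r1" and f: "f \<in> Ar C" "Cod C f = Dom C l1"
    and cm: "is_cokernel C (l2 \<cdot> l1 \<cdot> f) cm"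
    and a: "a \<in> Hom C w (Dom C l2)" and b: "b \<in> Hom C w (Dom C r2)"
    and ab: "cm \<cdot> l2 \<cdot> a = cm \<cdot> r2 \<cdot> b"
  obtains s z x where "is_epi C s" "Cod C s = w" "z \<in> Hom C (Dom C s) (Dom C f)"
    "x \<in> Hom C (Dom C s) (Dom C l1)" "l1 \<cdot> x = a \<cdot> s \<ominus> l1 \<cdot> f \<cdot> z" "r1 \<cdot> x = b \<cdot> s"
proof -
  note PB = is_pullbackD[OF pb] and CM = cokernelD[OF cm]
  define d where "d = l2 \<cdot> a \<ominus> r2 \<cdot> b"
  have d: "d \<in> Hom C w (Cod C l2)"
    unfolding d_def using PB a b by simp
  have "cm \<cdot> d = cm \<cdot> l2 \<cdot> a \<ominus> cm \<cdot> r2 \<cdot> b"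
    unfolding d_def using comp_diff[of "l2 \<cdot> a" w "Cod C l2" "r2 \<cdot> b" cm "Cod C cm"] PB a b f CM(2,3)
    by simp
  then have "cm \<cdot> d = Zer C (Dom C d) (Cod C cm)"
    using ab d PB(1-4) a b f CM(2,3) by simp
  moreover have "d \<in> Ar C" "Cod C d = Cod C (l2 \<cdot> l1 \<cdot> f)"
    using d PB(1-4) f by simp_all
  ultimately obtain s z where s: "is_epi C s" "Cod C s = Dom C d"
    and "z \<in> Hom C (Dom C s) (Dom C (l2 \<cdot> l1 \<cdot> f))" and dz: "d \<cdot> s = (l2 \<cdot> l1 \<cdot> f) \<cdot> z"
    using cokernel_Zer_factor_cover[OF cm] by blast
  then have z: "z \<in> Hom C (Dom C s) (Dom C f)"
    using PB(1-4) f by simp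
  note s_arr = epi_arr[OF s(1)]
  have s_cod: "Cod C s = w"
    using s(2) d by simp
  have "l2 \<cdot> a \<cdot> s \<ominus> r2 \<cdot> b \<cdot> s = l2 \<cdot> l1 \<cdot> f \<cdot> z"
    using dz diff_comp[of s "Dom C s" w "l2 \<cdot> a" "Cod C l2" "r2 \<cdot> b"] PB(1-4) a b f z s_arr s_cod
    unfolding d_def by simp
  then have "l2 \<cdot> (a \<cdot> s \<ominus> l1 \<cdot> f \<cdot> z) = r2 \<cdot> b \<cdot> s"
    by (intro comp_diff_eqI[of _ "Dom C s" "Dom C l2" _ _ "Cod C l2"]) (use PB(1-4) a b f z s_arr s_cod in simp_all)
  moreover have "a \<cdot> s \<ominus> l1 \<cdot> f \<cdot> z \<in> Hom C (Dom C s) (Dom C l2)" "b \<cdot> s \<in> Hom C (Dom C s) (Dom C r2)"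
    using PB(1-4) a b f z s_cod s_arr by simp_all
  ultimately obtain x where "x \<in> Hom C (Dom C s) (Dom C l1)"
    "l1 \<cdot> x = a \<cdot> s \<ominus> l1 \<cdot> f \<cdot> z" "r1 \<cdot> x = b \<cdot> s"
    using pullback_lift[OF pb] by metis
  then show ?thesis
    using that s(1) s_cod z by blast
qed

lemma cokernel_pullback_comparison_epi:
  assumes pb: "is_pullback C l2 r2 l1 r1"
    and f: "f \<in> Ar C" "Cod C f = Dom C l1"
    and cl: "is_cokernel C (l1 \<cdot> f) cl" and cr: "is_cokernel C (r1 \<cdot> f) cr"
    and cm: "is_cokernel C (l2 \<cdot> l1 \<cdot> f) cm"
    and l2s: "l2s \<in> Hom C (Cod C cl) (Cod C cm)" "l2s \<cdot> cl = cm \<cdot> l2"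
    and r2s: "r2s \<in> Hom C (Cod C cr) (Cod C cm)" "r2s \<cdot> cr = cm \<cdot> r2"
    and pb2: "is_pullback C l2s r2s p1 p2"
    and v: "v \<in> Hom C (Dom C l1) (Dom C p1)" "p1 \<cdot> v = cl \<cdot> l1" "p2 \<cdot> v = cr \<cdot> r1"
  shows "is_epi C v"
proof -
  note PB = is_pullbackD[OF pb] and PB2 = is_pullbackD[OF pb2]
    and CL = cokernelD[OF cl] and CR = cokernelD[OF cr] and CM = cokernelD[OF cm]
  have dom: "Dom C cl = Dom C l2" "Dom C cr = Dom C r2" "Dom C cm = Cod C l2"
    "Dom C l2s = Cod C cl" "Dom C r2s = Cod C cr"
    using CL(3) CR(3) CM(3) PB(1-4) f l2s(1) r2s(1) by simp_all
  note T = PB(1-4) PB2(1-4) f CL(2) CR(2) CM(2) l2s(1) r2s(1) v(1) dom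
  have "p1 \<in> Hom C (Dom C p1) (Cod C cl)" "p2 \<in> Hom C (Dom C p1) (Cod C cr)"
    using T by simp_all
  then obtain s a b where s: "is_epi C s" "Cod C s = Dom C p1"
    and a: "a \<in> Hom C (Dom C s) (Dom C l2)" and b: "b \<in> Hom C (Dom C s) (Dom C r2)"
    and cla: "cl \<cdot> a = p1 \<cdot> s" and crb: "cr \<cdot> b = p2 \<cdot> s"
    using epi_pair_cover[OF cokernel_epi[OF cl] cokernel_epi[OF cr]] dom by metis
  note T = T s epi_arr[OF s(1)] a b
  have "cm \<cdot> l2 \<cdot> a = cm \<cdot> r2 \<cdot> b"
    using T by (simp add: comp_reassoc[OF l2s(2)[symmetric]] comp_reassoc[OF r2s(2)[symmetric]]
        cla crb comp_reassoc[OF PB2(5)])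
  then obtain s' z x where s': "is_epi C s'" "Cod C s' = Dom C s"
    and z: "z \<in> Hom C (Dom C s') (Dom C f)" and x: "x \<in> Hom C (Dom C s') (Dom C l1)"
    and l1x: "l1 \<cdot> x = a \<cdot> s' \<ominus> l1 \<cdot> f \<cdot> z" and r1x: "r1 \<cdot> x = b \<cdot> s'"
    by (rule pullback_lift_modulo_image[OF pb f cm a b])
  note T = T s' epi_arr[OF s'(1)] z x
  have "cl \<cdot> l1 \<cdot> x = cl \<cdot> a \<cdot> s' \<ominus> Zer C (Dom C s') (Cod C cl)"
    using comp_diff[of "a \<cdot> s'" "Dom C s'" "Dom C l2" "l1 \<cdot> f \<cdot> z" cl "Cod C cl"]
      comp_reassoc[OF CL(4), of z] T by (simp add: l1x)
  then have clx: "cl \<cdot> l1 \<cdot> x = p1 \<cdot> s \<cdot> s'"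
    using T by (simp add: comp_reassoc[OF cla])
  have "cr \<cdot> r1 \<cdot> x = cr \<cdot> b \<cdot> s'"
    by (simp only: r1x)
  also have "\<dots> = (p2 \<cdot> s) \<cdot> s'"
    by (rule comp_reassoc[OF crb]) (use T in simp_all)
  finally have crx: "cr \<cdot> r1 \<cdot> x = p2 \<cdot> s \<cdot> s'"
    using T by simp
  have "v \<cdot> x = s \<cdot> s'"
  proof (rule pullback_arr_eq[OF pb2])
    show "p1 \<cdot> v \<cdot> x = p1 \<cdot> s \<cdot> s'"
      using T clx by (simp add: comp_reassoc[OF v(2)])
    show "p2 \<cdot> v \<cdot> x = p2 \<cdot> s \<cdot> s'"
      using T crx by (simp add: comp_reassoc[OF v(3)])
  qed (use T in simp_all)
  then show ?thesis
    using epi_if_comp_epi[of v x] epi_comp[OF s(1) s'(1)] T by simp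
qed

end

theorem lemma2p11:
  fixes C :: "('o, 'a) acat"
    and l2 r2 l1 r1 f cf cl cr cm l2s r2s p1 p2 ls rs u :: 'a
  assumes abel: "abelian C"
    and pb: "is_pullback C l2 r2 l1 r1"
    and f: "f \<in> Ar C" "Cod C f = Dom C l1"
    and cf: "is_cokernel C f cf"
    and cl: "is_cokernel C (Comp C l1 f) cl"
    and cr: "is_cokernel C (Comp C r1 f) cr"
    and cm: "is_cokernel C (Comp C l2 (Comp C l1 f)) cm"
    and l2s: "l2s \<in> Hom C (Cod C cl) (Cod C cm)" "Comp C l2s cl = Comp C cm l2"
    and r2s: "r2s \<in> Hom C (Cod C cr) (Cod C cm)" "Comp C r2s cr = Comp C cm r2"
    and pb2: "is_pullback C l2s r2s p1 p2"
    and ls: "ls \<in> Hom C (Cod C cf) (Cod C cl)" "Comp C ls cf = Comp C cl l1"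
    and rs: "rs \<in> Hom C (Cod C cf) (Cod C cr)" "Comp C rs cf = Comp C cr r1"
    and u: "u \<in> Hom C (Cod C cf) (Dom C p1)" "Comp C p1 u = ls" "Comp C p2 u = rs"
  shows "is_epi C u"
proof -
  interpret abelian_category C
    by (fact abelian_category.intro[OF abel])
  note CF = cokernelD[OF cf]
  have "is_epi C (u \<cdot> cf)"
  proof (rule cokernel_pullback_comparison_epi[OF pb f cl cr cm l2s r2s pb2])
    show "u \<cdot> cf \<in> Hom C (Dom C l1) (Dom C p1)"
      using u(1) CF f by simp
    show "p1 \<cdot> u \<cdot> cf = cl \<cdot> l1"
      using u(1) CF is_pullbackD[OF pb2] by (simp add: comp_reassoc[OF u(2)] ls(2))
    show "p2 \<cdot> u \<cdot> cf = cr \<cdot> r1"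
      using u(1) CF is_pullbackD[OF pb2] by (simp add: comp_reassoc[OF u(3)] rs(2))
  qed
  then show ?thesis
    using epi_if_comp_epi[of u cf] u(1) CF by simp
qed

end
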